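(* Let $\mathcal{A}=\{A_1,\dots,A_m\}$ be a bimodal collection of pairwise disjoint nonempty subsets of a finite abelian group $G$, with internal difference groups $H_1,\dots,H_m$, labelled so that $|A_i|<|H_i|$ exactly for $i=1,\dots,r$, where $r\ge2$. Let $D=(a_1+H_1)\setminus A_1$, where $a_1+H_1$ is the coset of $H_1$ containing $A_1$, and suppose $\mathcal{A}$ is in canonical position, i.e. $D$ is a subgroup of $G$. Then for every $i\ge r+1$, $H_i$ is a subgroup of $D$.
   Context: $G$ is written additively. The internal difference group $H_i$ of $A_i$ is the subgroup generated by all $x-y$ with $x,y\in A_i$; $A_i$ lies in a single coset of $H_i$ and $|A_i|\le|H_i|$. A collection $\{A_1,\dots,A_m\}$ of pairwise disjoint subsets of $G$ is bimodal if for every $i$ and every $\delta\in G\setminus\{0\}$, the number $N_i(\delta)$ of pairs $(a,b)$ with $a\in A_i$, $b\in A_j$ for some $j\neq i$, and $a-b=\delta$, satisfies $N_i(\delta)\in\{0,|A_i|\}$. (For such collections with $r\ge2$ the set $D$ equals $(a_i+H_i)\setminus A_i$ for every $i\le r$ and is a coset of a subgroup; canonical position means the collection has been translated so that $D$ is a subgroup.) *)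

theory Defs
  imports Main
begin

definition add_subgroup :: "'a::ab_group_add set \<Rightarrow> bool" where
  "add_subgroup S \<longleftrightarrow> 0 \<in> S \<and> (\<forall>x\<in>S. \<forall>y\<in>S. x + y \<in> S) \<and> (\<forall>x\<in>S. - x \<in> S)"

definition diff_group :: "'a::ab_group_add set \<Rightarrow> 'a set" where
  "diff_group A = \<Inter>{S. add_subgroup S \<and> {x - y | x y. x \<in> A \<and> y \<in> A} \<subseteq> S}"

definition N_count :: "(nat \<Rightarrow> 'a::ab_group_add set) \<Rightarrow> nat \<Rightarrow> nat \<Rightarrow> 'a \<Rightarrow> nat" where
  "N_count A m i \<delta> = card {(a, b). a \<in> A i \<and> (\<exists>j\<in>{1..m}. j \<noteq> i \<and> b \<in> A j) \<and> a - b = \<delta>}"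

definition bimodal :: "(nat \<Rightarrow> 'a::ab_group_add set) \<Rightarrow> nat \<Rightarrow> bool" where
  "bimodal A m \<longleftrightarrow> (\<forall>i\<in>{1..m}. \<forall>\<delta>. \<delta> \<noteq> 0 \<longrightarrow> N_count A m i \<delta> \<in> {0, card (A i)})"

end

theory Submission
  imports Defs
begin

text \<open>Bimodality says that the union of the sets other than \<open>A\<^sub>i\<close> is periodic under \<open>H\<^sub>i\<close>.
  For \<open>i > r\<close> the set \<open>A\<^sub>i\<close> is a full coset of \<open>H\<^sub>i\<close>, so the union \<open>X\<close> of all the sets is
  \<open>H\<^sub>i\<close>-periodic as well. Canonical position gives \<open>0 \<in> D\<close>, so \<open>H\<^sub>1\<close> is the coset containing
  \<open>A\<^sub>1\<close> and \<open>0 \<notin> X\<close>; periodicity then makes \<open>H\<^sub>i\<close> disjoint from \<open>X\<close>. Finally, for \<open>h \<in> H\<^sub>i\<close>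
  the point \<open>a\<^sub>1 + h\<close> lies in \<open>X\<close> but not in the \<open>H\<^sub>1\<close>-periodic part outside \<open>A\<^sub>1\<close>, so it lies
  in \<open>A\<^sub>1 \<subseteq> H\<^sub>1\<close>, whence \<open>h \<in> H\<^sub>1 - X = D\<close>.\<close>

lemma add_subgroup_zero: "add_subgroup S \<Longrightarrow> 0 \<in> S"
  unfolding add_subgroup_def by blast

lemma add_subgroup_add: "add_subgroup S \<Longrightarrow> x \<in> S \<Longrightarrow> y \<in> S \<Longrightarrow> x + y \<in> S"
  unfolding add_subgroup_def by blast

lemma add_subgroup_minus: "add_subgroup S \<Longrightarrow> x \<in> S \<Longrightarrow> - x \<in> S"
  unfolding add_subgroup_def by blast

lemma add_subgroup_diff: "add_subgroup S \<Longrightarrow> x \<in> S \<Longrightarrow> y \<in> S \<Longrightarrow> x - y \<in> S"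
  using add_subgroup_add[of S x "- y"] add_subgroup_minus[of S y] by simp

lemma add_subgroup_translate_self:
  assumes "add_subgroup S" and "a \<in> S"
  shows "(\<lambda>h. a + h) ` S = S"
proof
  show "(\<lambda>h. a + h) ` S \<subseteq> S" using assms add_subgroup_add by blast
  show "S \<subseteq> (\<lambda>h. a + h) ` S"
  proof
    fix x assume "x \<in> S"
    then have "x - a \<in> S" using assms add_subgroup_diff by blast
    then show "x \<in> (\<lambda>h. a + h) ` S" by (force intro: image_eqI[where x = "x - a"])
  qed
qed

lemma add_subgroup_diff_group: "add_subgroup (diff_group B)"
  unfolding diff_group_def add_subgroup_def by blast

lemma diff_in_diff_group: "x \<in> B \<Longrightarrow> y \<in> B \<Longrightarrow> x - y \<in> diff_group B"
  unfolding diff_group_def by blast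

lemma diff_group_least:
  "add_subgroup T \<Longrightarrow> (\<And>x y. x \<in> B \<Longrightarrow> y \<in> B \<Longrightarrow> x - y \<in> T) \<Longrightarrow> diff_group B \<subseteq> T"
  unfolding diff_group_def by blast

lemma subset_coset_diff_group: "c \<in> B \<Longrightarrow> B \<subseteq> (\<lambda>h. c + h) ` diff_group B"
proof
  fix x assume "c \<in> B" "x \<in> B"
  then have "x - c \<in> diff_group B" using diff_in_diff_group by blast
  then show "x \<in> (\<lambda>h. c + h) ` diff_group B" by (force intro: image_eqI[where x = "x - c"])
qed

lemma full_coset_of_diff_group:
  fixes B :: "'a::{ab_group_add, finite} set"
  assumes c: "c \<in> B" and card: "\<not> card B < card (diff_group B)"
  shows "B = (\<lambda>h. c + h) ` diff_group B"
proof -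
  have "card ((\<lambda>h. c + h) ` diff_group B) = card (diff_group B)"
    by (rule card_image) (simp add: inj_on_def)
  with card card_mono[OF _ subset_coset_diff_group[OF c]]
  have "card B = card ((\<lambda>h. c + h) ` diff_group B)" by simp
  with subset_coset_diff_group[OF c] show ?thesis
    using card_subset_eq[of "(\<lambda>h. c + h) ` diff_group B" B] by simp
qed

definition add_stabilizer :: "'a::ab_group_add set \<Rightarrow> 'a set" where
  "add_stabilizer U = {g. \<forall>u. u + g \<in> U \<longleftrightarrow> u \<in> U}"

lemma add_stabilizerD: "g \<in> add_stabilizer U \<Longrightarrow> u + g \<in> U \<longleftrightarrow> u \<in> U"
  unfolding add_stabilizer_def by blast

lemma add_subgroup_add_stabilizer: "add_subgroup (add_stabilizer U)"
  unfolding add_subgroup_def add_stabilizer_def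
proof (intro conjI ballI CollectI allI)
  fix x y u assume "x \<in> {g. \<forall>u. u + g \<in> U \<longleftrightarrow> u \<in> U}" "y \<in> {g. \<forall>u. u + g \<in> U \<longleftrightarrow> u \<in> U}"
  then have "u + x + y \<in> U \<longleftrightarrow> u \<in> U" by simp
  then show "u + (x + y) \<in> U \<longleftrightarrow> u \<in> U" by (simp add: add.assoc)
next
  fix x u assume "x \<in> {g. \<forall>u. u + g \<in> U \<longleftrightarrow> u \<in> U}"
  then have "u + - x + x \<in> U \<longleftrightarrow> u + - x \<in> U" by blast
  then show "u + - x \<in> U \<longleftrightarrow> u \<in> U" by simp
qed simp

lemma add_stabilizer_Un:
  "add_stabilizer U \<inter> add_stabilizer V \<subseteq> add_stabilizer (U \<union> V)"
  unfolding add_stabilizer_def by blast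

lemma subgroup_subset_add_stabilizer_coset:
  assumes "add_subgroup S"
  shows "S \<subseteq> add_stabilizer ((\<lambda>h. c + h) ` S)"
  unfolding add_stabilizer_def
proof (intro subsetI CollectI allI)
  fix g u assume g: "g \<in> S"
  have "u + g \<in> (\<lambda>h. c + h) ` S \<longleftrightarrow> u + g - c \<in> S" by (force simp: algebra_simps)
  also have "\<dots> \<longleftrightarrow> u - c \<in> S"
    using assms g add_subgroup_add[of S "u - c" g] add_subgroup_diff[of S "u + g - c" g]
    by (auto simp: algebra_simps)
  also have "\<dots> \<longleftrightarrow> u \<in> (\<lambda>h. c + h) ` S" by (force simp: algebra_simps)
  finally show "u + g \<in> (\<lambda>h. c + h) ` S \<longleftrightarrow> u \<in> (\<lambda>h. c + h) ` S" .
qed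

definition union_except :: "(nat \<Rightarrow> 'a set) \<Rightarrow> nat \<Rightarrow> nat \<Rightarrow> 'a set" where
  "union_except A m i = {b. \<exists>j\<in>{1..m}. j \<noteq> i \<and> b \<in> A j}"

lemma union_eq_Un_union_except:
  "i \<in> {1..m} \<Longrightarrow> (\<Union>j\<in>{1..m}. A j) = A i \<union> union_except A m i"
  unfolding union_except_def by (auto 4 3)

lemma disjoint_union_except:
  "\<forall>i\<in>{1..m}. \<forall>j\<in>{1..m}. i \<noteq> j \<longrightarrow> A i \<inter> A j = {} \<Longrightarrow> i \<in> {1..m} \<Longrightarrow>
    A i \<inter> union_except A m i = {}"
  unfolding union_except_def by blast

text \<open>The pairs counted by \<open>N\<^sub>i(y - u)\<close> include \<open>(y, u)\<close>, so by bimodality there is one for each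
  first coordinate in \<open>A\<^sub>i\<close>; the partner of \<open>x\<close> is \<open>u + (x - y)\<close>.\<close>

lemma bimodal_translate_union_except:
  fixes A :: "nat \<Rightarrow> 'a::{ab_group_add, finite} set"
  assumes disj: "\<forall>i\<in>{1..m}. \<forall>j\<in>{1..m}. i \<noteq> j \<longrightarrow> A i \<inter> A j = {}"
    and bim: "bimodal A m" and i: "i \<in> {1..m}"
    and x: "x \<in> A i" and y: "y \<in> A i" and u: "u \<in> union_except A m i"
  shows "u + (x - y) \<in> union_except A m i"
proof -
  define P where "P = {(a, b). a \<in> A i \<and> b \<in> union_except A m i \<and> a - b = y - u}"
  have "y \<noteq> u" using disjoint_union_except[OF disj i] y u by blast
  then have "card P \<in> {0, card (A i)}"
    using bim i unfolding bimodal_def N_count_def P_def union_except_def by simp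
  moreover have "(y, u) \<in> P" using y u unfolding P_def by simp
  ultimately have "card P = card (A i)" by auto
  moreover have "inj_on fst P" unfolding P_def inj_on_def by auto (metis add_diff_cancel_left' diff_add_cancel)
  ultimately have "card (fst ` P) = card (A i)" by (simp add: card_image)
  moreover have "fst ` P \<subseteq> A i" unfolding P_def by auto
  ultimately have "fst ` P = A i" using card_subset_eq[of "A i" "fst ` P"] by simp
  with x obtain b where "(x, b) \<in> P" by force
  moreover from this have "b = u + (x - y)"
    unfolding P_def by (simp add: algebra_simps)
  ultimately show ?thesis unfolding P_def by simp
qed

lemma bimodal_diff_group_stabilizes_union_except:
  fixes A :: "nat \<Rightarrow> 'a::{ab_group_add, finite} set"
  assumes disj: "\<forall>i\<in>{1..m}. \<forall>j\<in>{1..m}. i \<noteq> j \<longrightarrow> A i \<inter> A j = {}"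
    and bim: "bimodal A m" and i: "i \<in> {1..m}"
  shows "diff_group (A i) \<subseteq> add_stabilizer (union_except A m i)"
proof (rule diff_group_least[OF add_subgroup_add_stabilizer])
  fix x y assume xy: "x \<in> A i" "y \<in> A i"
  have "u + (x - y) \<in> union_except A m i \<longleftrightarrow> u \<in> union_except A m i" for u
  proof
    assume "u + (x - y) \<in> union_except A m i"
    then have "u + (x - y) + (y - x) \<in> union_except A m i"
      using bimodal_translate_union_except[OF disj bim i xy(2,1)] by blast
    then show "u \<in> union_except A m i" by simp
  qed (rule bimodal_translate_union_except[OF disj bim i xy])
  then show "x - y \<in> add_stabilizer (union_except A m i)"
    unfolding add_stabilizer_def by blast
qed

lemma bimodal_full_diff_group_stabilizes_union:
  fixes A :: "nat \<Rightarrow> 'a::{ab_group_add, finite} set"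
  assumes disj: "\<forall>i\<in>{1..m}. \<forall>j\<in>{1..m}. i \<noteq> j \<longrightarrow> A i \<inter> A j = {}"
    and bim: "bimodal A m" and i: "i \<in> {1..m}"
    and "A i \<noteq> {}" and full: "\<not> card (A i) < card (diff_group (A i))"
  shows "diff_group (A i) \<subseteq> add_stabilizer (\<Union>j\<in>{1..m}. A j)"
proof -
  obtain c where "c \<in> A i" using \<open>A i \<noteq> {}\<close> by blast
  then have "diff_group (A i) \<subseteq> add_stabilizer (A i)"
    using full_coset_of_diff_group[OF _ full] subgroup_subset_add_stabilizer_coset
      add_subgroup_diff_group by metis
  with bimodal_diff_group_stabilizes_union_except[OF disj bim i] add_stabilizer_Un
  show ?thesis unfolding union_eq_Un_union_except[OF i] by blast
qed

text \<open>In canonical position \<open>0 \<in> D\<close>, so the coset of \<open>H\<^sub>1\<close> containing \<open>A\<^sub>1\<close> is \<open>H\<^sub>1\<close> itself.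
  The \<open>H\<^sub>1\<close>-periodic set of the other points misses \<open>H\<^sub>1\<close>, as it misses \<open>a\<^sub>1\<close>.\<close>

lemma canonical_position:
  fixes A :: "nat \<Rightarrow> 'a::{ab_group_add, finite} set"
  assumes disj: "\<forall>i\<in>{1..m}. \<forall>j\<in>{1..m}. i \<noteq> j \<longrightarrow> A i \<inter> A j = {}"
    and bim: "bimodal A m" and one: "1 \<in> {1..m}" and a1: "a1 \<in> A 1"
    and canon: "add_subgroup ((\<lambda>h. a1 + h) ` diff_group (A 1) - A 1)"
  shows "(\<lambda>h. a1 + h) ` diff_group (A 1) = diff_group (A 1)"
    and "0 \<notin> (\<Union>j\<in>{1..m}. A j)"
proof -
  let ?H = "diff_group (A 1)" and ?U = "union_except A m 1"
  obtain h where h: "h \<in> ?H" "0 = a1 + h" and "0 \<notin> A 1"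
    using add_subgroup_zero[OF canon] by blast
  then have "a1 = - h" by (metis eq_neg_iff_add_eq_0)
  then have "a1 \<in> ?H" using add_subgroup_minus[OF add_subgroup_diff_group h(1)] by simp
  then show "(\<lambda>h. a1 + h) ` ?H = ?H"
    by (simp add: add_subgroup_translate_self add_subgroup_diff_group)
  have "?U \<inter> ?H = {}"
  proof (rule ccontr)
    assume "?U \<inter> ?H \<noteq> {}"
    then obtain u where "u \<in> ?U" "u \<in> ?H" by blast
    moreover from this have "a1 - u \<in> add_stabilizer ?U"
      using \<open>a1 \<in> ?H\<close> add_subgroup_diff[OF add_subgroup_diff_group]
        bimodal_diff_group_stabilizes_union_except[OF disj bim one] by blast
    ultimately have "u + (a1 - u) \<in> ?U" using add_stabilizerD by blast
    then show False using disjoint_union_except[OF disj one] a1 by auto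
  qed
  then show "0 \<notin> (\<Union>j\<in>{1..m}. A j)"
    using \<open>0 \<notin> A 1\<close> add_subgroup_zero[OF add_subgroup_diff_group]
    unfolding union_eq_Un_union_except[OF one] by blast
qed

theorem proposition3p8:
  fixes A :: "nat \<Rightarrow> 'a::{ab_group_add, finite} set"
    and m r :: nat and a1 :: 'a
  assumes disj: "\<forall>i\<in>{1..m}. \<forall>j\<in>{1..m}. i \<noteq> j \<longrightarrow> A i \<inter> A j = {}"
    and nonempty: "\<forall>i\<in>{1..m}. A i \<noteq> {}"
    and bim: "bimodal A m"
    and label: "\<forall>i\<in>{1..m}. (card (A i) < card (diff_group (A i)) \<longleftrightarrow> i \<le> r)"
    and r2: "2 \<le> r" and rm: "r \<le> m"
    and a1: "a1 \<in> A 1"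
    and canon: "add_subgroup ((\<lambda>h. a1 + h) ` diff_group (A 1) - A 1)"
  shows "\<forall>i\<in>{r+1..m}. add_subgroup (diff_group (A i)) \<and>
           diff_group (A i) \<subseteq> (\<lambda>h. a1 + h) ` diff_group (A 1) - A 1"
proof
  fix i assume "i \<in> {r+1..m}"
  then have i: "i \<in> {1..m}" and full: "\<not> card (A i) < card (diff_group (A i))"
    using label by auto
  have one: "1 \<in> {1..m}" using r2 rm by simp
  let ?H1 = "diff_group (A 1)" and ?U1 = "union_except A m 1" and ?X = "\<Union>j\<in>{1..m}. A j"
  note H1 = canonical_position[OF disj bim one a1 canon]
  have X: "?X = A 1 \<union> ?U1" by (rule union_eq_Un_union_except[OF one])
  have "h \<in> ?H1 - A 1" if h: "h \<in> diff_group (A i)" for h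
  proof -
    have stab: "h \<in> add_stabilizer ?X"
      using bimodal_full_diff_group_stabilizes_union[OF disj bim i _ full] nonempty i h by blast
    have "h \<notin> ?X" using add_stabilizerD[OF stab, of 0] H1(2) by simp
    have "a1 \<in> ?H1" "A 1 \<subseteq> ?H1"
      using H1(1) subset_coset_diff_group[OF a1] a1 by auto
    then have "a1 \<in> add_stabilizer ?U1"
      using bimodal_diff_group_stabilizes_union_except[OF disj bim one] by blast
    moreover have "h \<notin> ?U1" using \<open>h \<notin> ?X\<close> X by blast
    ultimately have "a1 + h \<notin> ?U1" using add_stabilizerD[of a1 ?U1 h] by (simp add: add.commute)
    moreover have "a1 + h \<in> ?X" using add_stabilizerD[OF stab, of a1] a1 X by blast
    ultimately have "a1 + h \<in> ?H1" using X \<open>A 1 \<subseteq> ?H1\<close> by blast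
    then have "a1 + h - a1 \<in> ?H1"
      using \<open>a1 \<in> ?H1\<close> add_subgroup_diff[OF add_subgroup_diff_group] by blast
    then show ?thesis using \<open>h \<notin> ?X\<close> one by auto
  qed
  then show "add_subgroup (diff_group (A i)) \<and> diff_group (A i) \<subseteq> (\<lambda>h. a1 + h) ` ?H1 - A 1"
    using add_subgroup_diff_group H1(1) by auto
qed

end
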